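(* Let $\mathcal{I}$ be a finite set of items and $\mathcal{D}$ a transaction database over $\mathcal{I}$. Let $t_o \in \mathcal{D}$ be a transaction with itemset $T_o \subseteq \mathcal{I}$, and let $\mathcal{D}^- = \mathcal{D} \setminus \{t_o\}$. Define the obsolete closed itemsets $\mathcal{C}_O(\mathcal{D}) = \mathcal{C}(\mathcal{D}) \setminus \mathcal{C}(\mathcal{D}^-)$ and the demoted closed itemsets $\mathcal{C}_D(\mathcal{D}) = \{c \in \mathcal{C}(\mathcal{D}) \cap \mathcal{C}(\mathcal{D}^-) \mid \sigma_{\mathcal{D}^-}(c) = \sigma_{\mathcal{D}}(c) - 1\}$. Then $$\Delta(\mathcal{D}, t_o) := \{T_o \cap c \mid c \in \mathcal{C}(\mathcal{D})\} = \mathcal{C}_O(\mathcal{D}) \cup \mathcal{C}_D(\mathcal{D}).$$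
   Context: A transaction database $\mathcal{D}$ over a finite item set $\mathcal{I}$ is a finite set of transactions, each a pair $(j, Z)$ with $j$ a transaction identifier (tid, all tids distinct) and $Z \subseteq \mathcal{I}$ an itemset. For $X \subseteq \mathcal{I}$, its support set is $\tau_{\mathcal{D}}(X) = \{ j \mid (j,Z) \in \mathcal{D},\ X \subseteq Z\}$ and its support is $\sigma_{\mathcal{D}}(X) = |\tau_{\mathcal{D}}(X)|$. An itemset $X \subseteq \mathcal{I}$ is closed in $\mathcal{D}$ if no proper superset $Y \supsetneq X$ (with $Y \subseteq \mathcal{I}$) has $\sigma_{\mathcal{D}}(Y) = \sigma_{\mathcal{D}}(X)$; $\mathcal{C}(\mathcal{D})$ denotes the family of all closed itemsets of $\mathcal{D}$ (in particular $\mathcal{I}$ itself is always closed). *)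

theory Defs
  imports Main
begin

definition trans_db :: "'i set \<Rightarrow> ('t \<times> 'i set) set \<Rightarrow> bool" where
  "trans_db I D \<longleftrightarrow> finite D \<and> (\<forall>(j,Z)\<in>D. Z \<subseteq> I) \<and>
     (\<forall>(j,Z)\<in>D. \<forall>(j',Z')\<in>D. j = j' \<longrightarrow> Z = Z')"

definition supp_set :: "('t \<times> 'i set) set \<Rightarrow> 'i set \<Rightarrow> 't set" where
  "supp_set D X = {j. \<exists>Z. (j, Z) \<in> D \<and> X \<subseteq> Z}"

definition supp :: "('t \<times> 'i set) set \<Rightarrow> 'i set \<Rightarrow> nat" where
  "supp D X = card (supp_set D X)"

definition is_closed :: "'i set \<Rightarrow> ('t \<times> 'i set) set \<Rightarrow> 'i set \<Rightarrow> bool" where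
  "is_closed I D X \<longleftrightarrow> X \<subseteq> I \<and> \<not> (\<exists>Y. X \<subset> Y \<and> Y \<subseteq> I \<and> supp D Y = supp D X)"

definition closed_sets :: "'i set \<Rightarrow> ('t \<times> 'i set) set \<Rightarrow> 'i set set" where
  "closed_sets I D = {X. is_closed I D X}"

definition obsolete_closed :: "'i set \<Rightarrow> ('t \<times> 'i set) set \<Rightarrow> ('t \<times> 'i set) \<Rightarrow> 'i set set" where
  "obsolete_closed I D t = closed_sets I D - closed_sets I (D - {t})"

definition demoted_closed :: "'i set \<Rightarrow> ('t \<times> 'i set) set \<Rightarrow> ('t \<times> 'i set) \<Rightarrow> 'i set set" where
  "demoted_closed I D t = {c \<in> closed_sets I D \<inter> closed_sets I (D - {t}).
       int (supp (D - {t}) c) = int (supp D c) - 1}"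

end

theory Submission
  imports Defs
begin

text \<open>Removing the transaction \<open>(j\<^sub>o, T\<^sub>o)\<close> deletes \<open>j\<^sub>o\<close> from exactly the support sets of the
  subsets of \<open>T\<^sub>o\<close> and leaves all other support sets unchanged. Hence a closed itemset not contained
  in \<open>T\<^sub>o\<close> stays closed with the same support, so every obsolete or demoted itemset lies in \<open>T\<^sub>o\<close>.
  Conversely, closed itemsets are stable under intersection and \<open>T\<^sub>o\<close> is closed, so \<open>T\<^sub>o \<inter> c\<close> is
  closed for closed \<open>c\<close>; its support drops by one, so it is demoted if it stays closed and
  obsolete otherwise.\<close>

lemma supp_set_antimono: "X \<subseteq> Y \<Longrightarrow> supp_set D Y \<subseteq> supp_set D X"
  unfolding supp_set_def by blast

lemma finite_supp_set:
  assumes "finite D"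
  shows "finite (supp_set D X)"
proof (rule finite_subset)
  show "supp_set D X \<subseteq> fst ` D"
    unfolding supp_set_def by force
qed (use assms in blast)

lemma is_closed_iff_supp_set:
  assumes "finite D"
  shows "is_closed I D X \<longleftrightarrow>
           X \<subseteq> I \<and> (\<forall>Y. X \<subset> Y \<longrightarrow> Y \<subseteq> I \<longrightarrow> supp_set D Y \<noteq> supp_set D X)"
proof -
  have "supp D Y = supp D X \<longleftrightarrow> supp_set D Y = supp_set D X" if "X \<subseteq> Y" for Y
    unfolding supp_def
    using card_subset_eq[OF finite_supp_set[OF assms] supp_set_antimono[OF that]] by auto
  then show ?thesis
    unfolding is_closed_def by blast
qed

lemma trans_db_finite: "trans_db I D \<Longrightarrow> finite D"
  unfolding trans_db_def by blast

lemma trans_db_itemset_subset: "trans_db I D \<Longrightarrow> (j, T) \<in> D \<Longrightarrow> T \<subseteq> I"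
  unfolding trans_db_def by blast

lemma trans_db_supp_set_Un:
  assumes "trans_db I D"
  shows "supp_set D (X \<union> Y) = supp_set D X \<inter> supp_set D Y"
  using assms unfolding trans_db_def supp_set_def by fast

lemma trans_db_mem_supp_set_iff:
  assumes "trans_db I D" "(j, T) \<in> D"
  shows "j \<in> supp_set D X \<longleftrightarrow> X \<subseteq> T"
  using assms unfolding trans_db_def supp_set_def by fast

lemma trans_db_supp_set_remove:
  assumes "trans_db I D" "(j, T) \<in> D"
  shows "supp_set (D - {(j, T)}) X = supp_set D X - {j}"
  using assms unfolding trans_db_def supp_set_def by fast

text \<open>The closure system is that of a Galois connection, so it is closed under intersection:
  a proper extension \<open>Z\<close> of \<open>X \<inter> Y\<close> with the same support would give \<open>X \<union> Z\<close> the support of \<open>X\<close>.\<close>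

lemma is_closed_Int:
  assumes db: "trans_db I D" and X: "is_closed I D X" and Y: "is_closed I D Y"
  shows "is_closed I D (X \<inter> Y)"
proof -
  note closed_iff = is_closed_iff_supp_set[OF trans_db_finite[OF db]]
  have absorb: "Z \<subseteq> A"
    if A: "is_closed I D A" and "X \<inter> Y \<subseteq> A" "Z \<subseteq> I"
      and Z: "supp_set D Z = supp_set D (X \<inter> Y)" for A Z
  proof (rule ccontr)
    assume "\<not> Z \<subseteq> A"
    then have "A \<subset> A \<union> Z"
      by blast
    moreover have "A \<union> Z \<subseteq> I"
      using A \<open>Z \<subseteq> I\<close> unfolding is_closed_def by blast
    moreover have "supp_set D (A \<union> Z) = supp_set D A"
      unfolding trans_db_supp_set_Un[OF db] Z
      using supp_set_antimono[OF \<open>X \<inter> Y \<subseteq> A\<close>] by (rule Int_absorb2)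
    ultimately show False
      using A unfolding closed_iff by blast
  qed
  show ?thesis
    unfolding closed_iff
  proof (intro conjI allI impI notI)
    show "X \<inter> Y \<subseteq> I"
      using X unfolding is_closed_def by blast
  next
    fix Z
    assume "X \<inter> Y \<subset> Z" "Z \<subseteq> I" and Z: "supp_set D Z = supp_set D (X \<inter> Y)"
    have "Z \<subseteq> X"
      using absorb[OF X _ \<open>Z \<subseteq> I\<close> Z] by blast
    moreover have "Z \<subseteq> Y"
      using absorb[OF Y _ \<open>Z \<subseteq> I\<close> Z] by blast
    ultimately show False
      using \<open>X \<inter> Y \<subset> Z\<close> by blast
  qed
qed

lemma is_closed_transaction:
  assumes db: "trans_db I D" and t: "(j, T) \<in> D"
  shows "is_closed I D T"
  unfolding is_closed_iff_supp_set[OF trans_db_finite[OF db]]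
proof (intro conjI allI impI)
  show "T \<subseteq> I"
    using db t by (rule trans_db_itemset_subset)
  fix Y
  assume "T \<subset> Y"
  then have "j \<notin> supp_set D Y" "j \<in> supp_set D T"
    unfolding trans_db_mem_supp_set_iff[OF db t] by auto
  then show "supp_set D Y \<noteq> supp_set D T"
    by blast
qed

lemma supp_remove_transaction_subset:
  assumes db: "trans_db I D" and t: "(j, T) \<in> D" and "X \<subseteq> T"
  shows "int (supp (D - {(j, T)}) X) = int (supp D X) - 1"
proof -
  have j: "j \<in> supp_set D X"
    using trans_db_mem_supp_set_iff[OF db t] \<open>X \<subseteq> T\<close> by blast
  have "supp_set D X \<noteq> {}" "finite (supp_set D X)"
    using j finite_supp_set[OF trans_db_finite[OF db]] by auto
  then have "supp D X \<ge> 1"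
    unfolding supp_def by (simp add: Suc_leI card_gt_0_iff)
  moreover have "supp (D - {(j, T)}) X = supp D X - 1"
    unfolding supp_def trans_db_supp_set_remove[OF db t] using j by (rule card_Diff_singleton)
  ultimately show ?thesis
    by simp
qed

lemma is_closed_remove_transaction_not_subset:
  assumes db: "trans_db I D" and t: "(j, T) \<in> D" and "\<not> X \<subseteq> T" and X: "is_closed I D X"
  shows "is_closed I (D - {(j, T)}) X" and "supp (D - {(j, T)}) X = supp D X"
proof -
  have same: "supp_set (D - {(j, T)}) Y = supp_set D Y" if "X \<subseteq> Y" for Y
  proof -
    have "j \<notin> supp_set D Y"
      unfolding trans_db_mem_supp_set_iff[OF db t] using \<open>\<not> X \<subseteq> T\<close> that by blast
    then show ?thesis
      unfolding trans_db_supp_set_remove[OF db t] by simp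
  qed
  have fin: "finite D" "finite (D - {(j, T)})"
    using trans_db_finite[OF db] by simp_all
  show "is_closed I (D - {(j, T)}) X"
    using X unfolding is_closed_iff_supp_set[OF fin(1)] is_closed_iff_supp_set[OF fin(2)]
    by (simp add: same less_imp_le)
  show "supp (D - {(j, T)}) X = supp D X"
    unfolding supp_def by (simp add: same)
qed

theorem mainTheorem1:
  fixes I :: "'i set" and D :: "('t \<times> 'i set) set" and j\<^sub>o :: 't and T\<^sub>o :: "'i set"
  assumes "finite I"
    and "trans_db I D"
    and "(j\<^sub>o, T\<^sub>o) \<in> D"
  shows "{T\<^sub>o \<inter> c | c. c \<in> closed_sets I D}
         = obsolete_closed I D (j\<^sub>o, T\<^sub>o) \<union> demoted_closed I D (j\<^sub>o, T\<^sub>o)"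
proof (intro equalityI subsetI)
  fix x
  assume "x \<in> {T\<^sub>o \<inter> c | c. c \<in> closed_sets I D}"
  then obtain c where x: "x = T\<^sub>o \<inter> c" and c: "is_closed I D c"
    unfolding closed_sets_def by blast
  have "is_closed I D x"
    unfolding x using assms(2) is_closed_transaction[OF assms(2,3)] c by (rule is_closed_Int)
  moreover have "int (supp (D - {(j\<^sub>o, T\<^sub>o)}) x) = int (supp D x) - 1"
    using assms(2,3) by (rule supp_remove_transaction_subset) (simp add: x)
  ultimately show "x \<in> obsolete_closed I D (j\<^sub>o, T\<^sub>o) \<union> demoted_closed I D (j\<^sub>o, T\<^sub>o)"
    unfolding obsolete_closed_def demoted_closed_def closed_sets_def by blast
next
  fix x
  assume x: "x \<in> obsolete_closed I D (j\<^sub>o, T\<^sub>o) \<union> demoted_closed I D (j\<^sub>o, T\<^sub>o)"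
  then have closed: "is_closed I D x"
    and changed: "\<not> is_closed I (D - {(j\<^sub>o, T\<^sub>o)}) x \<or>
                  int (supp (D - {(j\<^sub>o, T\<^sub>o)}) x) = int (supp D x) - 1"
    unfolding obsolete_closed_def demoted_closed_def closed_sets_def by auto
  have "x \<subseteq> T\<^sub>o"
  proof (rule ccontr)
    assume "\<not> x \<subseteq> T\<^sub>o"
    from is_closed_remove_transaction_not_subset[OF assms(2,3) this closed] changed
    show False
      by simp
  qed
  then have "x = T\<^sub>o \<inter> x"
    by blast
  with closed show "x \<in> {T\<^sub>o \<inter> c | c. c \<in> closed_sets I D}"
    unfolding closed_sets_def by blast
qed

end
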